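(* Let $S$ and $T$ be strings and let $(s_1,\dots,s_k)$ be a maximal block decomposition of $S$ with respect to $T$. Then any fragment of $S$ that occurs in $T$ is contained in at most three consecutive blocks $s_i$. Furthermore, any occurrence in $S$ of a longest common substring of $S$ and $T$ contains the first letter of some block.
   Context: A block decomposition of $S$ with respect to $T$ is a sequence of strings $(s_1,\dots,s_k)$ with $S=s_1s_2\cdots s_k$ such that every $s_i$ is a substring of $T$ (the $s_i$ are called blocks, and each corresponds to a fragment of $S$ in the obvious way). It is maximal if $s_is_{i+1}$ is not a substring of $T$ for every $i\in\{1,\dots,k-1\}$. A fragment of $S$ is a contiguous substring $S[i..j]$ at specified positions. A longest common substring of $S$ and $T$ is a longest string that is a substring of both. *)

theory Defs
  imports Main "HOL-Library.Sublist"
begin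

text \<open>Strings are lists; "substring" is contiguous sublist (HOL-Library.Sublist.sublist).\<close>

definition block_decomp :: "'a list list \<Rightarrow> 'a list \<Rightarrow> 'a list \<Rightarrow> bool" where
  "block_decomp bs S T \<longleftrightarrow> concat bs = S \<and> (\<forall>b \<in> set bs. sublist b T)"

definition maximal_block_decomp :: "'a list list \<Rightarrow> 'a list \<Rightarrow> 'a list \<Rightarrow> bool" where
  "maximal_block_decomp bs S T \<longleftrightarrow> block_decomp bs S T \<and>
     (\<forall>i. Suc i < length bs \<longrightarrow> \<not> sublist (bs ! i @ bs ! Suc i) T)"

text \<open>Start position (0-based) of block m in S; block m occupies positions
  [block_start bs m, block_start bs (Suc m)).\<close>
definition block_start :: "'a list list \<Rightarrow> nat \<Rightarrow> nat" where
  "block_start bs m = length (concat (take m bs))"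

text \<open>Fragment of S with positions [i, j) (half-open, 0-based).\<close>
definition fragment :: "'a list \<Rightarrow> nat \<Rightarrow> nat \<Rightarrow> 'a list" where
  "fragment S i j = take (j - i) (drop i S)"

definition is_lcs :: "'a list \<Rightarrow> 'a list \<Rightarrow> 'a list \<Rightarrow> bool" where
  "is_lcs u S T \<longleftrightarrow> sublist u S \<and> sublist u T \<and>
     (\<forall>v. sublist v S \<and> sublist v T \<longrightarrow> length v \<le> length u)"

end

theory Submission
  imports Defs
begin

(* If a fragment occurring in T covered two whole consecutive blocks, their concatenation
   would occur in T, contradicting maximality; hence it meets at most three blocks.
   An occurrence of a longest common substring that contains no block start lies strictly
   inside one block, so extending it leftwards to the start of that block yields a longer
   common substring.  All blocks are nonempty, since an empty block could be merged with
   a neighbour. *)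

lemma length_fragment: "j \<le> length S \<Longrightarrow> length (fragment S i j) = j - i"
  unfolding fragment_def by simp

lemma fragment_append:
  assumes "i \<le> m" "m \<le> j"
  shows "fragment S i m @ fragment S m j = fragment S i j"
proof -
  have "j - i = (m - i) + (j - m)" using assms by simp
  then show ?thesis unfolding fragment_def
    by (metis take_add drop_drop assms(1) le_add_diff_inverse2)
qed

lemma sublist_fragment_fragment:
  assumes "i \<le> i'" "i' \<le> j'" "j' \<le> j"
  shows "sublist (fragment S i' j') (fragment S i j)"
proof -
  have "fragment S i j = fragment S i i' @ fragment S i' j' @ fragment S j' j"
    using fragment_append[of i i' j S] fragment_append[of i' j' j S] assms by simp
  then show ?thesis by simp
qed

lemma sublist_fragment: "sublist (fragment S i j) S"
  unfolding fragment_def by (meson sublist_drop sublist_take sublist_order.order.trans)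

lemma block_start_0 [simp]: "block_start bs 0 = 0"
  unfolding block_start_def by simp

lemma block_start_length [simp]: "block_start bs (length bs) = length (concat bs)"
  unfolding block_start_def by simp

lemma block_start_mono:
  assumes "a \<le> c"
  shows "block_start bs a \<le> block_start bs c"
proof -
  have "take c bs = take a bs @ take (c - a) (drop a bs)"
    using assms by (metis le_add_diff_inverse take_add)
  then show ?thesis unfolding block_start_def by simp
qed

lemma fragment_concat_block_start:
  assumes "a \<le> c"
  shows "fragment (concat bs) (block_start bs a) (block_start bs c)
           = concat (take (c - a) (drop a bs))"
proof -
  have "take c bs = take a bs @ take (c - a) (drop a bs)"
    using assms by (metis le_add_diff_inverse take_add)
  moreover have "concat bs = concat (take a bs) @ concat (take (c - a) (drop a bs))
                   @ concat (drop (c - a) (drop a bs))"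
    by (metis append_take_drop_id concat_append)
  ultimately show ?thesis
    unfolding fragment_def block_start_def by simp
qed

lemma fragment_concat_block:
  "a < length bs \<Longrightarrow> fragment (concat bs) (block_start bs a) (block_start bs (Suc a)) = bs ! a"
  using fragment_concat_block_start[of a "Suc a" bs] by (simp add: Cons_nth_drop_Suc[symmetric])

lemma fragment_concat_two_blocks:
  "Suc a < length bs \<Longrightarrow>
     fragment (concat bs) (block_start bs a) (block_start bs (Suc (Suc a))) = bs ! a @ bs ! Suc a"
  using fragment_concat_block_start[of a "Suc (Suc a)" bs]
  by (simp add: numeral_2_eq_2 Cons_nth_drop_Suc[symmetric] Suc_lessD)

lemma block_containing_position:
  assumes "p < length (concat bs)"
  obtains a where "a < length bs" "block_start bs a \<le> p" "p < block_start bs (Suc a)"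
proof -
  obtain a where "a < length bs" "\<forall>c\<le>a. \<not> p < block_start bs c" "p < block_start bs (Suc a)"
    using ex_least_nat_less[of "\<lambda>c. p < block_start bs c" "length bs"] assms by auto
  then show thesis using that by (simp add: not_less)
qed

lemma maximal_block_decomp_block_nonempty:
  assumes "maximal_block_decomp bs S T" "S \<noteq> []" "m < length bs"
  shows "bs ! m \<noteq> []"
proof
  assume empty: "bs ! m = []"
  have S: "concat bs = S" and in_T: "\<And>b. b \<in> set bs \<Longrightarrow> sublist b T"
    and no_pair: "\<And>c. Suc c < length bs \<Longrightarrow> \<not> sublist (bs ! c @ bs ! Suc c) T"
    using assms(1) unfolding maximal_block_decomp_def block_decomp_def by auto
  consider "length bs = 1" | "Suc m < length bs" | "0 < m" "Suc (m - 1) < length bs"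
    using assms(3) by linarith
  then show False
  proof cases
    case 1
    then have "bs = [bs ! m]" using assms(3) by (metis One_nat_def length_0_conv length_Suc_conv
      less_one nth_Cons_0)
    then show False using S empty assms(2) by (metis concat.simps append_Nil2)
  next
    case 2
    then show False using no_pair[of m] in_T[of "bs ! Suc m"] empty by simp
  next
    case 3
    then show False using no_pair[of "m - 1"] in_T[of "bs ! (m - 1)"] empty by simp
  qed
qed

lemma maximal_block_decomp_two_blocks_not_in_fragment:
  assumes "maximal_block_decomp bs S T" "Suc a < length bs"
    and "i \<le> block_start bs a" "block_start bs (Suc (Suc a)) \<le> j"
  shows "\<not> sublist (fragment S i j) T"
proof
  assume in_T: "sublist (fragment S i j) T"
  have S: "concat bs = S"
    using assms(1) unfolding maximal_block_decomp_def block_decomp_def by simp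
  have "block_start bs a \<le> block_start bs (Suc (Suc a))" by (simp add: block_start_mono)
  then have "sublist (bs ! a @ bs ! Suc a) (fragment S i j)"
    using sublist_fragment_fragment[of i _ _ j S] fragment_concat_two_blocks[OF assms(2)] S assms(3,4)
    by metis
  then have "sublist (bs ! a @ bs ! Suc a) T"
    using in_T by (rule sublist_order.order.trans)
  then show False using assms(1,2) unfolding maximal_block_decomp_def by blast
qed

lemma maximal_block_decomp_fragment_within_three_blocks:
  assumes decomp: "maximal_block_decomp bs S T" and "S \<noteq> []"
    and ij: "i \<le> j" "j \<le> length S" and in_T: "sublist (fragment S i j) T"
  shows "\<exists>a b. a \<le> b \<and> b < length bs \<and> b \<le> a + 2 \<and>
           block_start bs a \<le> i \<and> j \<le> block_start bs (Suc b)"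
proof -
  have S: "concat bs = S"
    using decomp unfolding maximal_block_decomp_def block_decomp_def by simp
  show ?thesis
  proof (cases "i = j")
    case True
    define p where "p = min i (length S - 1)"
    have "0 < length S" using \<open>S \<noteq> []\<close> by simp
    then have "p < length (concat bs)" using S unfolding p_def by (simp add: min.strict_coboundedI2)
    then obtain a where a: "a < length bs" "block_start bs a \<le> p" "p < block_start bs (Suc a)"
      by (rule block_containing_position)
    have "block_start bs (Suc a) \<le> length S"
      using block_start_mono[of "Suc a" "length bs" bs] a(1) S by simp
    then have "block_start bs a \<le> i \<and> j \<le> block_start bs (Suc a)"
      using a True ij p_def by linarith
    then show ?thesis using a(1) by (intro exI[of _ a]) auto
  next
    case False
    then have "i < length (concat bs)" "j - 1 < length (concat bs)" using ij S by auto
    then obtain a b where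
      a: "a < length bs" "block_start bs a \<le> i" "i < block_start bs (Suc a)" and
      b: "b < length bs" "block_start bs b \<le> j - 1" "j - 1 < block_start bs (Suc b)"
      by (meson block_containing_position)
    have "a \<le> b"
    proof (rule ccontr)
      assume "\<not> a \<le> b"
      then have "block_start bs (Suc b) \<le> block_start bs a" by (simp add: block_start_mono)
      then show False using a b ij False by linarith
    qed
    moreover have "b \<le> a + 2"
    proof (rule ccontr)
      assume "\<not> b \<le> a + 2"
      then have "block_start bs (Suc (Suc (Suc a))) \<le> block_start bs b"
        by (simp add: block_start_mono)
      then have "\<not> sublist (fragment S i j) T"
        using maximal_block_decomp_two_blocks_not_in_fragment[OF decomp, of "Suc a" i j]
          \<open>\<not> b \<le> a + 2\<close> a b by simp
      then show False using in_T by contradiction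
    qed
    ultimately show ?thesis using a b by (intro exI[of _ a] exI[of _ b]) auto
  qed
qed

lemma maximal_block_decomp_lcs_contains_block_start:
  assumes decomp: "maximal_block_decomp bs S T" and "S \<noteq> []" and lcs: "is_lcs u S T"
    and occ: "i + length u \<le> length S" "fragment S i (i + length u) = u"
  shows "\<exists>m < length bs. bs ! m \<noteq> [] \<and> i \<le> block_start bs m \<and> block_start bs m < i + length u"
proof -
  have S: "concat bs = S" and in_T: "\<And>b. b \<in> set bs \<Longrightarrow> sublist b T"
    using decomp unfolding maximal_block_decomp_def block_decomp_def by auto
  have nonempty: "\<And>m. m < length bs \<Longrightarrow> bs ! m \<noteq> []"
    using maximal_block_decomp_block_nonempty[OF decomp \<open>S \<noteq> []\<close>] .
  have common: "sublist (bs ! m) S \<and> sublist (bs ! m) T" if "m < length bs" for m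
    using fragment_concat_block[OF that] sublist_fragment[of S] S in_T that by (metis nth_mem)
  have "length bs > 0" using S \<open>S \<noteq> []\<close> by auto
  then have "length (bs ! 0) \<le> length u" using common[of 0] lcs unfolding is_lcs_def by blast
  then have "u \<noteq> []" using nonempty \<open>length bs > 0\<close> by auto
  then have "i < length (concat bs)" using occ(1) S by (cases u) auto
  then obtain a where a: "a < length bs" "block_start bs a \<le> i" "i < block_start bs (Suc a)"
    by (rule block_containing_position)
  consider "block_start bs a = i"
    | "Suc a < length bs" "block_start bs (Suc a) < i + length u"
    | "block_start bs a < i" "i + length u \<le> block_start bs (Suc a)"
  proof -
    have "i + length u \<le> block_start bs (Suc a)"
      if "Suc a < length bs \<Longrightarrow> \<not> block_start bs (Suc a) < i + length u"
    proof (cases "Suc a < length bs")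
      case False
      then have "Suc a = length bs" using a(1) by simp
      then show ?thesis using occ(1) S by simp
    qed (use that in simp)
    then show ?thesis using that a(2) by (meson le_neq_implies_less not_less)
  qed
  then show ?thesis
  proof cases
    case 1
    then show ?thesis using a nonempty \<open>u \<noteq> []\<close> by auto
  next
    case 2
    then show ?thesis using a nonempty by (intro exI[of _ "Suc a"]) auto
  next
    case 3
    let ?v = "fragment S (block_start bs a) (i + length u)"
    have "sublist ?v (bs ! a)"
      using sublist_fragment_fragment[of "block_start bs a" "block_start bs a" "i + length u"
          "block_start bs (Suc a)" S]
        fragment_concat_block[OF a(1)] S 3 by simp
    then have "sublist ?v S \<and> sublist ?v T"
      using common[OF a(1)] sublist_fragment by (blast intro: sublist_order.order.trans)
    then have "length ?v \<le> length u" using lcs unfolding is_lcs_def by blast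
    then show ?thesis using length_fragment[OF occ(1)] 3 by simp
  qed
qed

theorem lemma4:
  fixes S T :: "'a list" and bs :: "'a list list"
  assumes "maximal_block_decomp bs S T" and "S \<noteq> []"
  shows "(\<forall>i j. i \<le> j \<and> j \<le> length S \<and> sublist (fragment S i j) T \<longrightarrow>
            (\<exists>a b. a \<le> b \<and> b < length bs \<and> b \<le> a + 2 \<and>
                   block_start bs a \<le> i \<and> j \<le> block_start bs (Suc b)))
       \<and> (\<forall>u i. is_lcs u S T \<and> i + length u \<le> length S \<and> fragment S i (i + length u) = u \<longrightarrow>
            (\<exists>m < length bs. bs ! m \<noteq> [] \<and>
                 i \<le> block_start bs m \<and> block_start bs m < i + length u))"
  using maximal_block_decomp_fragment_within_three_blocks[OF assms]
    maximal_block_decomp_lcs_contains_block_start[OF assms] by blast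

end
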